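(* Let $\mathcal M,\mathcal N$ be finite polyptych lattices over $F$, let $F\subseteq F'\subseteq\mathbb R$, and let $(\mathcal M,\mathcal N,\mathsf v,\mathsf w)$ be a strict dual $F'$-pair. Then $\mathsf w$ and $\mathsf v$ extend to isomorphisms of $F_{\ge0}$-semialgebras $\mathsf w:S_{\mathcal N_{F'}}\to P_{\mathcal M_{F'}}$ and $\mathsf v:S_{\mathcal M_{F'}}\to P_{\mathcal N_{F'}}$, given by $\mathsf w(\bigoplus_{n\in S}n)=\min_{n\in S}\mathsf w(n)$ (pointwise minimum of functions), $\mathsf w(\infty)=\infty$, and similarly for $\mathsf v$.
   Context: Fix a subring $F$ with $\mathbb Z\subseteq F\subseteq\mathbb R$. A polyptych lattice of rank $r$ over $F$ is a collection $\{M_\alpha\}_{\alpha\in I}$ of free $F$-modules of rank $r$ with piecewise $F$-linear maps (continuous and $F$-linear on each cone of some complete $F$-rational fan) $\mu_{\alpha,\beta}:M_\alpha\to M_\beta$ with $\mu_{\alpha,\alpha}=\mathrm{id}$, $\mu_{\alpha,\beta}=\mu_{\beta,\alpha}^{-1}$, $\mu_{\beta,\gamma}\circ\mu_{\alpha,\beta}=\mu_{\alpha,\gamma}$; finite if $I$ is finite. Elements are classes of $\bigsqcup M_\alpha$ under $m_\alpha\sim\mu_{\alpha,\beta}(m_\alpha)$; $\pi_\alpha$ chart maps; $\mathcal M_{F'}$ has charts $M_\alpha\otimes_FF'$ (extended mutations), e.g. $\mathcal M_{\mathbb R}$. $m+_\alpha m':=\pi_\alpha^{-1}(\pi_\alpha(m)+\pi_\alpha(m'))$,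 $\lambda m:=\pi_\alpha^{-1}(\lambda\pi_\alpha(m))$ ($\lambda\ge 0$). $\Sigma(\mathcal M)$: the coarsest complete fan of cones of $\mathcal M_{\mathbb R}$ (subsets whose chart images are $F$-rational polyhedral cones) on whose chart images all mutations are linear. A point of $\mathcal M_{F'}$ is $p:\mathcal M_{F'}\to F'$ with $p(m)+p(m')=\min_\alpha p(m+_\alpha m')$ and $p(\lambda m)=\lambda p(m)$ ($\lambda\in F'_{\ge0}$); $\mathrm{Sp}_{F'}(\mathcal M)$ is the set of such; $\mathrm{Sp}_{\mathbb R}(\mathcal M,\alpha)$ is the set of $p\in\mathrm{Sp}_{\mathbb R}(\mathcal M)$ linear on chart $\alpha$. Strict dual $F'$-pair: maps $\mathsf v:\mathcal M_{\mathbb R}\to\mathrm{Sp}_{\mathbb R}(\mathcal N)$, $\mathsf w:\mathcal N_{\mathbb R}\to\mathrm{Sp}_{\mathbb R}(\mathcal M)$ with (1) $\mathsf v(\mathcal M_{F'})\subseteq\mathrm{Sp}_{F'}(\mathcal N)$, $\mathsf w(\mathcal N_{F'})\subseteq\mathrm{Sp}_{F'}(\mathcal M)$; (2) $\mathsf v(m)(n)=\mathsf w(n)(m)$ for $m\in\mathcal M_{F'},n\in\mathcal N_{F'}$; (3) these restrictions are bijections; (4) the sets $\mathsf v^{-1}(\mathrm{Sp}_{\mathbb R}(\mathcal N,\gamma))$, $\gamma$ ranging over chart indices of $\mathcal N$, are exactly the maximal-dimensional cones of $\Sigma(\mathcal M)$, and symmetrically for $\mathsf w$. Point-convex hull: $\mathcal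 H_{p,a}=\{m:p(m)\ge a\}$, $\mathrm{p\text{-}conv}_{F'}(S)=\bigcap\{\mathcal H_{p,a}:p\in\mathrm{Sp}_{F'}(\mathcal M),a\in F',S\subseteq\mathcal H_{p,a}\}$. Canonical semialgebra $S_{\mathcal M_{F'}}$: free commutative idempotent semigroup ($\oplus$) on elements of $\mathcal M_{F'}$ modulo $\bigoplus_{S}m=\bigoplus_{S'}m$ when $\mathrm{p\text{-}conv}_{F'}(S)=\mathrm{p\text{-}conv}_{F'}(S')$, plus identity $\infty$, with product $m\star m'=\bigoplus_\alpha(m+_\alpha m')$ extended distributively and $F_{\ge 0}$-action by scaling elements. The point semialgebra $P_{\mathcal M_{F'}}$ is the sub-semialgebra of functions $\mathcal M_{\mathbb R}\to\mathbb R\cup\{\infty\}$ (operations pointwise $\min$ and pointwise $+$, scaling by $F_{\ge0}$) generated by $\mathrm{Sp}_{F'}(\mathcal M)$ (extended to $\mathcal M_{\mathbb R}$), together with $\infty$. *)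

theory Defs
  imports "HOL-Analysis.Analysis"
begin

definition subring_R :: "real set \<Rightarrow> bool" where
  "subring_R F \<longleftrightarrow> (\<forall>z::int. real_of_int z \<in> F) \<and>
     (\<forall>x\<in>F. \<forall>y\<in>F. x + y \<in> F \<and> x * y \<in> F \<and> - x \<in> F)"

definition Fvec :: "real set \<Rightarrow> (real^'r) set" where
  "Fvec F = {x. \<forall>i. x $ i \<in> F}"

definition rat_cone :: "real set \<Rightarrow> (real^'r) set \<Rightarrow> bool" where
  "rat_cone F C \<longleftrightarrow> (\<exists>G. finite G \<and> G \<subseteq> Fvec F \<and>
     C = {x. \<exists>c. (\<forall>g\<in>G. 0 \<le> c g) \<and> x = (\<Sum>g\<in>G. c g *\<^sub>R g)})"

definition complete_fan :: "real set \<Rightarrow> (real^'r) set set \<Rightarrow> bool" where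
  "complete_fan F \<Phi> \<longleftrightarrow> finite \<Phi> \<and> (\<forall>C\<in>\<Phi>. rat_cone F C) \<and>
     (\<forall>C\<in>\<Phi>. \<forall>D. D face_of C \<and> D \<noteq> {} \<longrightarrow> D \<in> \<Phi>) \<and>
     (\<forall>C\<in>\<Phi>. \<forall>D\<in>\<Phi>. (C \<inter> D) face_of C \<and> (C \<inter> D) face_of D) \<and>
     \<Union>\<Phi> = UNIV"

definition pw_F_linear :: "real set \<Rightarrow> (real^'r \<Rightarrow> real^'r) \<Rightarrow> bool" where
  "pw_F_linear F f \<longleftrightarrow> continuous_on UNIV f \<and>
     (\<exists>\<Phi>. complete_fan F \<Phi> \<and>
        (\<forall>C\<in>\<Phi>. \<exists>A::real^'r^'r. (\<forall>i j. A $ i $ j \<in> F) \<and> (\<forall>x\<in>C. f x = A *v x)))"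

text \<open>A polyptych lattice of rank CARD('r) over F: index set I, chart M_alpha = F^r
  (inside R^r), mutations mu alpha beta (given through their real extensions).\<close>
definition polyptych :: "real set \<Rightarrow> 'i set \<Rightarrow> ('i \<Rightarrow> 'i \<Rightarrow> real^'r \<Rightarrow> real^'r) \<Rightarrow> bool" where
  "polyptych F I mu \<longleftrightarrow> I \<noteq> {} \<and>
     (\<forall>\<alpha>\<in>I. \<forall>\<beta>\<in>I. pw_F_linear F (mu \<alpha> \<beta>)) \<and>
     (\<forall>\<alpha>\<in>I. mu \<alpha> \<alpha> = id) \<and>
     (\<forall>\<alpha>\<in>I. \<forall>\<beta>\<in>I. mu \<alpha> \<beta> \<circ> mu \<beta> \<alpha> = id) \<and>
     (\<forall>\<alpha>\<in>I. \<forall>\<beta>\<in>I. \<forall>\<gamma>\<in>I. mu \<beta> \<gamma> \<circ> mu \<alpha> \<beta> = mu \<alpha> \<gamma>)"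

definition finite_polyptych :: "real set \<Rightarrow> 'i set \<Rightarrow> ('i \<Rightarrow> 'i \<Rightarrow> real^'r \<Rightarrow> real^'r) \<Rightarrow> bool" where
  "finite_polyptych F I mu \<longleftrightarrow> polyptych F I mu \<and> finite I"

text \<open>Elements of M_R: compatible families of chart coordinates (the class of
  (alpha, x) is the family beta |-> mu alpha beta x).  pi_alpha m = m alpha.\<close>
definition elems_R :: "'i set \<Rightarrow> ('i \<Rightarrow> 'i \<Rightarrow> real^'r \<Rightarrow> real^'r) \<Rightarrow> ('i \<Rightarrow> real^'r) set" where
  "elems_R I mu = {m. (\<forall>\<beta>. \<beta> \<notin> I \<longrightarrow> m \<beta> = undefined) \<and>
                      (\<forall>\<alpha>\<in>I. \<forall>\<beta>\<in>I. m \<beta> = mu \<alpha> \<beta> (m \<alpha>))}"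

definition elems :: "real set \<Rightarrow> 'i set \<Rightarrow> ('i \<Rightarrow> 'i \<Rightarrow> real^'r \<Rightarrow> real^'r) \<Rightarrow> ('i \<Rightarrow> real^'r) set" where
  "elems F' I mu = {m \<in> elems_R I mu. \<forall>\<alpha>\<in>I. m \<alpha> \<in> Fvec F'}"

definition chart_inv :: "'i set \<Rightarrow> ('i \<Rightarrow> 'i \<Rightarrow> real^'r \<Rightarrow> real^'r) \<Rightarrow> 'i \<Rightarrow> real^'r \<Rightarrow> ('i \<Rightarrow> real^'r)" where
  "chart_inv I mu \<alpha> x = (\<lambda>\<beta>. if \<beta> \<in> I then mu \<alpha> \<beta> x else undefined)"

definition padd :: "'i set \<Rightarrow> ('i \<Rightarrow> 'i \<Rightarrow> real^'r \<Rightarrow> real^'r) \<Rightarrow> 'i \<Rightarrow> ('i \<Rightarrow> real^'r) \<Rightarrow> ('i \<Rightarrow> real^'r) \<Rightarrow> ('i \<Rightarrow> real^'r)" where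
  "padd I mu \<alpha> m m' = chart_inv I mu \<alpha> (m \<alpha> + m' \<alpha>)"

text \<open>lambda m (independent of the chart used; we use a fixed chart of I)\<close>
definition psmul :: "'i set \<Rightarrow> ('i \<Rightarrow> 'i \<Rightarrow> real^'r \<Rightarrow> real^'r) \<Rightarrow> real \<Rightarrow> ('i \<Rightarrow> real^'r) \<Rightarrow> ('i \<Rightarrow> real^'r)" where
  "psmul I mu c m = (let \<alpha> = (SOME \<alpha>. \<alpha> \<in> I) in chart_inv I mu \<alpha> (c *\<^sub>R m \<alpha>))"

definition Sp :: "real set \<Rightarrow> 'i set \<Rightarrow> ('i \<Rightarrow> 'i \<Rightarrow> real^'r \<Rightarrow> real^'r) \<Rightarrow> (('i \<Rightarrow> real^'r) \<Rightarrow> real) set" where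
  "Sp F' I mu = {p. p \<in> extensional (elems F' I mu) \<and>
     (\<forall>m\<in>elems F' I mu. p m \<in> F') \<and>
     (\<forall>m\<in>elems F' I mu. \<forall>m'\<in>elems F' I mu.
         p m + p m' = Min ((\<lambda>\<alpha>. p (padd I mu \<alpha> m m')) ` I)) \<and>
     (\<forall>c\<in>F'. 0 \<le> c \<longrightarrow> (\<forall>m\<in>elems F' I mu. p (psmul I mu c m) = c * p m))}"

definition Sp_chart :: "'i set \<Rightarrow> ('i \<Rightarrow> 'i \<Rightarrow> real^'r \<Rightarrow> real^'r) \<Rightarrow> 'i \<Rightarrow> (('i \<Rightarrow> real^'r) \<Rightarrow> real) set" where
  "Sp_chart I mu \<gamma> = {p \<in> Sp UNIV I mu. \<exists>L::real^'r \<Rightarrow> real. linear L \<and>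
        (\<forall>m\<in>elems UNIV I mu. p m = L (m \<gamma>))}"

definition ext_pt :: "real set \<Rightarrow> 'i set \<Rightarrow> ('i \<Rightarrow> 'i \<Rightarrow> real^'r \<Rightarrow> real^'r) \<Rightarrow> (('i \<Rightarrow> real^'r) \<Rightarrow> real) \<Rightarrow> (('i \<Rightarrow> real^'r) \<Rightarrow> real)" where
  "ext_pt F' I mu p = (THE q. q \<in> Sp UNIV I mu \<and> (\<forall>m\<in>elems F' I mu. q m = p m))"

definition lin_fan :: "real set \<Rightarrow> 'i set \<Rightarrow> ('i \<Rightarrow> 'i \<Rightarrow> real^'r \<Rightarrow> real^'r) \<Rightarrow> ('i \<Rightarrow> real^'r) set set \<Rightarrow> bool" where
  "lin_fan F I mu \<Sigma> \<longleftrightarrow> finite \<Sigma> \<and> (\<forall>C\<in>\<Sigma>. C \<subseteq> elems UNIV I mu) \<and>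
     (\<forall>\<alpha>\<in>I. complete_fan F ((\<lambda>C. (\<lambda>m. m \<alpha>) ` C) ` \<Sigma>)) \<and>
     (\<forall>\<alpha>\<in>I. \<forall>\<beta>\<in>I. \<forall>C\<in>\<Sigma>. \<exists>L::real^'r \<Rightarrow> real^'r. linear L \<and>
         (\<forall>m\<in>C. mu \<alpha> \<beta> (m \<alpha>) = L (m \<alpha>)))"

definition Sigma_fan :: "real set \<Rightarrow> 'i set \<Rightarrow> ('i \<Rightarrow> 'i \<Rightarrow> real^'r \<Rightarrow> real^'r) \<Rightarrow> ('i \<Rightarrow> real^'r) set set" where
  "Sigma_fan F I mu = (THE \<Sigma>. lin_fan F I mu \<Sigma> \<and>
      (\<forall>\<Sigma>'. lin_fan F I mu \<Sigma>' \<longrightarrow> (\<forall>C'\<in>\<Sigma>'. \<exists>C\<in>\<Sigma>. C' \<subseteq> C)))"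

definition max_cones :: "real set \<Rightarrow> 'i set \<Rightarrow> ('i \<Rightarrow> 'i \<Rightarrow> real^'r \<Rightarrow> real^'r) \<Rightarrow> ('i \<Rightarrow> real^'r) set set" where
  "max_cones F I mu = {C \<in> Sigma_fan F I mu.
      \<exists>\<alpha>\<in>I. aff_dim ((\<lambda>m. m \<alpha>) ` C) = int CARD('r)}"

definition strict_dual_pair ::
  "real set \<Rightarrow> real set \<Rightarrow> 'i set \<Rightarrow> ('i \<Rightarrow> 'i \<Rightarrow> real^'r \<Rightarrow> real^'r)
   \<Rightarrow> 'j set \<Rightarrow> ('j \<Rightarrow> 'j \<Rightarrow> real^'s \<Rightarrow> real^'s)
   \<Rightarrow> (('i \<Rightarrow> real^'r) \<Rightarrow> ('j \<Rightarrow> real^'s) \<Rightarrow> real)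
   \<Rightarrow> (('j \<Rightarrow> real^'s) \<Rightarrow> ('i \<Rightarrow> real^'r) \<Rightarrow> real) \<Rightarrow> bool" where
  "strict_dual_pair F F' I mu J nu v w \<longleftrightarrow>
     (\<forall>m\<in>elems UNIV I mu. v m \<in> Sp UNIV J nu) \<and>
     (\<forall>n\<in>elems UNIV J nu. w n \<in> Sp UNIV I mu) \<and>
     (\<forall>m\<in>elems F' I mu. restrict (v m) (elems F' J nu) \<in> Sp F' J nu) \<and>
     (\<forall>n\<in>elems F' J nu. restrict (w n) (elems F' I mu) \<in> Sp F' I mu) \<and>
     (\<forall>m\<in>elems F' I mu. \<forall>n\<in>elems F' J nu. v m n = w n m) \<and>
     bij_betw (\<lambda>m. restrict (v m) (elems F' J nu)) (elems F' I mu) (Sp F' J nu) \<and>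
     bij_betw (\<lambda>n. restrict (w n) (elems F' I mu)) (elems F' J nu) (Sp F' I mu) \<and>
     (\<lambda>\<gamma>. {m \<in> elems UNIV I mu. v m \<in> Sp_chart J nu \<gamma>}) ` J = max_cones F I mu \<and>
     (\<lambda>\<gamma>. {n \<in> elems UNIV J nu. w n \<in> Sp_chart I mu \<gamma>}) ` I = max_cones F J nu"

record 'a semialg =
  scar :: "'a set"
  spl :: "'a \<Rightarrow> 'a \<Rightarrow> 'a"
  stm :: "'a \<Rightarrow> 'a \<Rightarrow> 'a"
  ssc :: "real \<Rightarrow> 'a \<Rightarrow> 'a"
  sinf :: 'a

definition sa_iso :: "real set \<Rightarrow> ('a \<Rightarrow> 'b) \<Rightarrow> 'a semialg \<Rightarrow> 'b semialg \<Rightarrow> bool" where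
  "sa_iso F \<Phi> A B \<longleftrightarrow> bij_betw \<Phi> (scar A) (scar B) \<and>
     (\<forall>x\<in>scar A. \<forall>y\<in>scar A. \<Phi> (spl A x y) = spl B (\<Phi> x) (\<Phi> y) \<and>
                             \<Phi> (stm A x y) = stm B (\<Phi> x) (\<Phi> y)) \<and>
     (\<forall>c\<in>F. 0 \<le> c \<longrightarrow> (\<forall>x\<in>scar A. \<Phi> (ssc A c x) = ssc B c (\<Phi> x))) \<and>
     \<Phi> (sinf A) = sinf B"

definition halfsp :: "real set \<Rightarrow> 'i set \<Rightarrow> ('i \<Rightarrow> 'i \<Rightarrow> real^'r \<Rightarrow> real^'r) \<Rightarrow> (('i \<Rightarrow> real^'r) \<Rightarrow> real) \<Rightarrow> real \<Rightarrow> ('i \<Rightarrow> real^'r) set" where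
  "halfsp F' I mu p a = {m \<in> elems F' I mu. a \<le> p m}"

definition pconv :: "real set \<Rightarrow> 'i set \<Rightarrow> ('i \<Rightarrow> 'i \<Rightarrow> real^'r \<Rightarrow> real^'r) \<Rightarrow> ('i \<Rightarrow> real^'r) set \<Rightarrow> ('i \<Rightarrow> real^'r) set" where
  "pconv F' I mu S = elems F' I mu \<inter>
     \<Inter>{halfsp F' I mu p a | p a. p \<in> Sp F' I mu \<and> a \<in> F' \<and> S \<subseteq> halfsp F' I mu p a}"

definition finne :: "real set \<Rightarrow> 'i set \<Rightarrow> ('i \<Rightarrow> 'i \<Rightarrow> real^'r \<Rightarrow> real^'r) \<Rightarrow> ('i \<Rightarrow> real^'r) set set" where
  "finne F' I mu = {S. finite S \<and> S \<noteq> {} \<and> S \<subseteq> elems F' I mu}"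

text \<open>Identification of formal sums: bigoplus_S m = bigoplus_S' m iff p-conv(S) = p-conv(S').\<close>
definition pcrel :: "real set \<Rightarrow> 'i set \<Rightarrow> ('i \<Rightarrow> 'i \<Rightarrow> real^'r \<Rightarrow> real^'r) \<Rightarrow> (('i \<Rightarrow> real^'r) set \<times> ('i \<Rightarrow> real^'r) set) set" where
  "pcrel F' I mu = {(S, T). S \<in> finne F' I mu \<and> T \<in> finne F' I mu \<and>
                           pconv F' I mu S = pconv F' I mu T}"

definition cls :: "real set \<Rightarrow> 'i set \<Rightarrow> ('i \<Rightarrow> 'i \<Rightarrow> real^'r \<Rightarrow> real^'r) \<Rightarrow> ('i \<Rightarrow> real^'r) set \<Rightarrow> ('i \<Rightarrow> real^'r) set set" where
  "cls F' I mu S = pcrel F' I mu `` {S}"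

definition rep :: "'a set set \<Rightarrow> 'a set" where
  "rep X = (SOME S. S \<in> X)"

text \<open>S_{M_{F'}}: None is the identity infinity; Some X is the class X of the formal
  sum over any representative S in X.\<close>
definition canon_sa :: "real set \<Rightarrow> 'i set \<Rightarrow> ('i \<Rightarrow> 'i \<Rightarrow> real^'r \<Rightarrow> real^'r) \<Rightarrow> ('i \<Rightarrow> real^'r) set set option semialg" where
  "canon_sa F' I mu =
    \<lparr> scar = insert None (Some ` (finne F' I mu // pcrel F' I mu)),
      spl = (\<lambda>x y. case (x, y) of
                (None, _) \<Rightarrow> y
              | (_, None) \<Rightarrow> x
              | (Some X, Some Y) \<Rightarrow> Some (cls F' I mu (rep X \<union> rep Y))),
      stm = (\<lambda>x y. case (x, y) of
                (Some X, Some Y) \<Rightarrow> Some (cls F' I mu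
                    {padd I mu \<alpha> s t | \<alpha> s t. \<alpha> \<in> I \<and> s \<in> rep X \<and> t \<in> rep Y})
              | _ \<Rightarrow> None),
      ssc = (\<lambda>c x. map_option (\<lambda>X. cls F' I mu (psmul I mu c ` rep X)) x),
      sinf = None \<rparr>"

text \<open>Functions M_R -> R \<union> {infinity}: None is the constant infinity, Some f a real function
  (extensional on M_R).  Operations: pointwise min, pointwise +, scaling.\<close>
definition ppl :: "'a set \<Rightarrow> ('a \<Rightarrow> real) option \<Rightarrow> ('a \<Rightarrow> real) option \<Rightarrow> ('a \<Rightarrow> real) option" where
  "ppl D x y = (case (x, y) of
       (None, _) \<Rightarrow> y
     | (_, None) \<Rightarrow> x
     | (Some f, Some g) \<Rightarrow> Some (restrict (\<lambda>m. min (f m) (g m)) D))"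

definition ptm :: "'a set \<Rightarrow> ('a \<Rightarrow> real) option \<Rightarrow> ('a \<Rightarrow> real) option \<Rightarrow> ('a \<Rightarrow> real) option" where
  "ptm D x y = (case (x, y) of
       (Some f, Some g) \<Rightarrow> Some (restrict (\<lambda>m. f m + g m) D)
     | _ \<Rightarrow> None)"

definition psc :: "'a set \<Rightarrow> real \<Rightarrow> ('a \<Rightarrow> real) option \<Rightarrow> ('a \<Rightarrow> real) option" where
  "psc D c x = map_option (\<lambda>f. restrict (\<lambda>m. c * f m) D) x"

definition point_sa :: "real set \<Rightarrow> real set \<Rightarrow> 'i set \<Rightarrow> ('i \<Rightarrow> 'i \<Rightarrow> real^'r \<Rightarrow> real^'r) \<Rightarrow> (('i \<Rightarrow> real^'r) \<Rightarrow> real) option semialg" where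
  "point_sa F F' I mu =
    \<lparr> scar = \<Inter>{X. None \<in> X \<and>
                  (\<forall>p\<in>Sp F' I mu. Some (ext_pt F' I mu p) \<in> X) \<and>
                  (\<forall>x\<in>X. \<forall>y\<in>X. ppl (elems UNIV I mu) x y \<in> X \<and> ptm (elems UNIV I mu) x y \<in> X) \<and>
                  (\<forall>c\<in>F. 0 \<le> c \<longrightarrow> (\<forall>x\<in>X. psc (elems UNIV I mu) c x \<in> X))},
      spl = ppl (elems UNIV I mu),
      stm = ptm (elems UNIV I mu),
      ssc = psc (elems UNIV I mu),
      sinf = None \<rparr>"

end

theory Submission imports Defs begin

text \<open>Under a strict dual pair the F'-points of M are exactly the restrictions of the w n,
  n in N_F', and dually for v.  Hence the half-spaces defining point-convex hulls in N_F' are those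
  of the v m, and finite sets S, T have the same hull iff min_{s in S} w s and min_{t in T} w t agree
  on M_F'.  Real points are superadditive and positively homogeneous in a chart, hence concave and
  continuous, so agreement on M_F' (which contains the integer points of a chart) propagates to all
  of M_R.  Thus S |-> min_{s in S} w s induces an injective map on the canonical semialgebra.  It
  turns the sum into pointwise minimum, scaling into scaling, and the product, supported on the
  points s +_alpha t, into pointwise sum, because the minimum over alpha of w (s +_alpha t) is
  w s + w t: the defining identity of the point v m read through the duality.  Its image contains
  the generators w n and is closed under the operations, so it is the point semialgebra; v is
  handled symmetrically.\<close>

abbreviation some_chart :: "'i set \<Rightarrow> 'i" where
  "some_chart I \<equiv> SOME \<alpha>. \<alpha> \<in> I"

lemma continuous_homogeneous_eq_if_eq_on_integer_points:
  fixes h1 h2 :: "real^'r \<Rightarrow> real"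
  assumes "continuous_on UNIV h1" and "continuous_on UNIV h2"
    and hom1: "\<And>c x. 0 \<le> c \<Longrightarrow> h1 (c *\<^sub>R x) = c * h1 x"
    and hom2: "\<And>c x. 0 \<le> c \<Longrightarrow> h2 (c *\<^sub>R x) = c * h2 x"
    and eq: "\<And>z. (\<forall>i. z $ i \<in> \<int>) \<Longrightarrow> h1 z = h2 z"
  shows "h1 x = h2 x"
proof -
  \<comment> \<open>approximate x by the points \<lfloor>k x\<rfloor> / k, on which h1 and h2 agree by homogeneity\<close>
  define y where "y k = inverse (real (Suc k)) *\<^sub>R (\<chi> i. real_of_int \<lfloor>real (Suc k) * x $ i\<rfloor>)" for k
  have eq_y: "h1 (y k) = h2 (y k)" for k
    unfolding y_def using hom1 hom2 eq[of "\<chi> i. real_of_int \<lfloor>real (Suc k) * x $ i\<rfloor>"] by simp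
  have "y \<longlonglongrightarrow> x"
  proof (rule vec_tendstoI)
    fix i
    have "x $ i - inverse (real (Suc k)) \<le> y k $ i \<and> y k $ i \<le> x $ i" for k
    proof
      let ?N = "real (Suc k)" and ?f = "real_of_int \<lfloor>real (Suc k) * x $ i\<rfloor>"
      have y: "y k $ i = ?f / ?N" by (simp add: y_def divide_inverse mult.commute)
      have "?N * x $ i - 1 \<le> ?f" and f: "?f \<le> ?N * x $ i" by linarith+
      moreover have "x $ i - inverse ?N = (?N * x $ i - 1) / ?N" by (simp add: field_simps)
      ultimately show "x $ i - inverse ?N \<le> y k $ i"
        unfolding y using divide_right_mono[of _ _ ?N] by auto
      show "y k $ i \<le> x $ i" unfolding y using f by (simp add: pos_divide_le_eq mult.commute)
    qed
    then show "(\<lambda>k. y k $ i) \<longlonglongrightarrow> x $ i"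
      by (intro real_tendsto_sandwich[OF _ _ LIMSEQ_inverse_real_of_nat_add_minus tendsto_const]
          always_eventually allI) simp_all
  qed
  then have "(\<lambda>k. h1 (y k)) \<longlonglongrightarrow> h1 x" and "(\<lambda>k. h2 (y k)) \<longlonglongrightarrow> h2 x"
    using assms(1,2) by (auto intro: continuous_on_tendsto_compose)
  then show ?thesis
    using eq_y LIMSEQ_unique by auto
qed

lemma subring_R_Ints: "subring_R F \<Longrightarrow> z \<in> \<int> \<Longrightarrow> z \<in> F"
  unfolding subring_R_def by (auto elim: Ints_cases)

lemma subring_R_sum:
  assumes "subring_R F" and "\<And>a. a \<in> A \<Longrightarrow> f a \<in> F"
  shows "sum f A \<in> F"
  using assms(2)
proof (induction A rule: infinite_finite_induct)
  case (infinite A)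
  then show ?case using subring_R_Ints[OF assms(1), of 0] by simp
next
  case empty
  then show ?case using subring_R_Ints[OF assms(1), of 0] by simp
next
  case (insert x A)
  then show ?case using assms(1) unfolding subring_R_def by auto
qed

lemma subring_R_mult: "subring_R F \<Longrightarrow> x \<in> F \<Longrightarrow> y \<in> F \<Longrightarrow> x * y \<in> F"
  unfolding subring_R_def by blast

lemma SpD:
  assumes "p \<in> Sp F' I mu"
  shows "p \<in> extensional (elems F' I mu)"
    and "m \<in> elems F' I mu \<Longrightarrow> p m \<in> F'"
    and "m \<in> elems F' I mu \<Longrightarrow> m' \<in> elems F' I mu \<Longrightarrow>
           p m + p m' = Min ((\<lambda>\<alpha>. p (padd I mu \<alpha> m m')) ` I)"
    and "c \<in> F' \<Longrightarrow> 0 \<le> c \<Longrightarrow> m \<in> elems F' I mu \<Longrightarrow> p (psmul I mu c m) = c * p m"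
  using assms unfolding Sp_def by blast+

lemma Fvec_UNIV [simp]: "Fvec UNIV = UNIV"
  unfolding Fvec_def by auto

lemma elems_imp_elems_UNIV: "m \<in> elems F' I mu \<Longrightarrow> m \<in> elems UNIV I mu"
  unfolding elems_def by simp

lemma finneD: "S \<in> finne F' I mu \<Longrightarrow> finite S \<and> S \<noteq> {} \<and> S \<subseteq> elems F' I mu"
  unfolding finne_def by blast

text \<open>Read in the chart in which psmul scales; an element of M_R is determined by its coordinates
  there.\<close>
definition continuous_homogeneous ::
    "'i set \<Rightarrow> ('i \<Rightarrow> 'i \<Rightarrow> real^'r \<Rightarrow> real^'r) \<Rightarrow> (('i \<Rightarrow> real^'r) \<Rightarrow> real) \<Rightarrow> bool" where
  "continuous_homogeneous I mu h \<longleftrightarrow>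
     continuous_on UNIV (\<lambda>x. h (chart_inv I mu (some_chart I) x)) \<and>
     (\<forall>c x. 0 \<le> c \<longrightarrow>
        h (chart_inv I mu (some_chart I) (c *\<^sub>R x)) = c * h (chart_inv I mu (some_chart I) x))"

lemma continuous_homogeneous_add:
  "continuous_homogeneous I mu h1 \<Longrightarrow> continuous_homogeneous I mu h2 \<Longrightarrow>
     continuous_homogeneous I mu (\<lambda>m. h1 m + h2 m)"
  unfolding continuous_homogeneous_def by (simp add: distrib_left continuous_on_add)

lemma continuous_homogeneous_cmult:
  "continuous_homogeneous I mu h \<Longrightarrow> continuous_homogeneous I mu (\<lambda>m. c * h m)"
  unfolding continuous_homogeneous_def by (simp add: continuous_on_mult_left)

lemma continuous_homogeneous_min:
  "continuous_homogeneous I mu h1 \<Longrightarrow> continuous_homogeneous I mu h2 \<Longrightarrow>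
     continuous_homogeneous I mu (\<lambda>m. min (h1 m) (h2 m))"
  unfolding continuous_homogeneous_def by (auto intro: continuous_on_min simp: min_mult_distrib_left)

lemma continuous_homogeneous_Min:
  assumes "finite A" "A \<noteq> {}" "\<And>a. a \<in> A \<Longrightarrow> continuous_homogeneous I mu (f a)"
  shows "continuous_homogeneous I mu (\<lambda>m. Min ((\<lambda>a. f a m) ` A))"
  using assms
proof (induction A rule: finite_ne_induct)
  case (insert a A)
  then show ?case by (simp add: continuous_homogeneous_min)
qed simp

context
  fixes F :: "real set" and I :: "'i set" and mu :: "'i \<Rightarrow> 'i \<Rightarrow> real^'r \<Rightarrow> real^'r"
  assumes poly: "polyptych F I mu"
begin

lemma some_chart_in: "some_chart I \<in> I"
  using poly unfolding polyptych_def by (simp add: some_in_eq)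

lemma mu_self: "\<alpha> \<in> I \<Longrightarrow> mu \<alpha> \<alpha> x = x"
  using poly unfolding polyptych_def by simp

lemma mu_trans: "\<alpha> \<in> I \<Longrightarrow> \<beta> \<in> I \<Longrightarrow> \<gamma> \<in> I \<Longrightarrow> mu \<beta> \<gamma> (mu \<alpha> \<beta> x) = mu \<alpha> \<gamma> x"
  using poly unfolding polyptych_def by (metis comp_apply)

lemma chart_inv_in_elems_UNIV: "\<alpha> \<in> I \<Longrightarrow> chart_inv I mu \<alpha> x \<in> elems UNIV I mu"
  unfolding elems_def elems_R_def chart_inv_def by (simp add: mu_trans)

lemma chart_inv_apply_self: "\<alpha> \<in> I \<Longrightarrow> chart_inv I mu \<alpha> x \<alpha> = x"
  unfolding chart_inv_def by (simp add: mu_self)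

lemma chart_inv_of_elem:
  assumes "\<alpha> \<in> I" and "m \<in> elems UNIV I mu"
  shows "chart_inv I mu \<alpha> (m \<alpha>) = m"
proof
  fix \<beta>
  have "\<forall>\<beta>. \<beta> \<notin> I \<longrightarrow> m \<beta> = undefined" and "\<forall>\<beta>\<in>I. m \<beta> = mu \<alpha> \<beta> (m \<alpha>)"
    using assms unfolding elems_def elems_R_def by blast+
  then show "chart_inv I mu \<alpha> (m \<alpha>) \<beta> = m \<beta>"
    unfolding chart_inv_def by simp
qed

lemma mu_Fvec:
  assumes "subring_R F'" "F \<subseteq> F'" "\<alpha> \<in> I" "\<beta> \<in> I" "x \<in> Fvec F'"
  shows "mu \<alpha> \<beta> x \<in> Fvec F'"
proof -
  obtain \<Phi> where "complete_fan F \<Phi>"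
    and lin: "\<forall>C\<in>\<Phi>. \<exists>A::real^'r^'r. (\<forall>i j. A $ i $ j \<in> F) \<and> (\<forall>x\<in>C. mu \<alpha> \<beta> x = A *v x)"
    using poly assms(3,4) unfolding polyptych_def pw_F_linear_def by blast
  then obtain C where "C \<in> \<Phi>" "x \<in> C" unfolding complete_fan_def by blast
  with lin obtain A :: "real^'r^'r" where "\<forall>i j. A $ i $ j \<in> F" "mu \<alpha> \<beta> x = A *v x" by blast
  then show ?thesis
    using assms(5) unfolding Fvec_def matrix_vector_mult_def
    by (auto intro!: subring_R_sum[OF assms(1)] subring_R_mult[OF assms(1)] dest: subsetD[OF assms(2)])
qed

lemma chart_inv_in_elems:
  assumes "subring_R F'" "F \<subseteq> F'" "\<alpha> \<in> I" "x \<in> Fvec F'"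
  shows "chart_inv I mu \<alpha> x \<in> elems F' I mu"
  using chart_inv_in_elems_UNIV[OF assms(3)] mu_Fvec[OF assms(1,2,3) _ assms(4)]
  unfolding elems_def chart_inv_def by auto

lemma padd_in_elems_UNIV: "\<alpha> \<in> I \<Longrightarrow> padd I mu \<alpha> m m' \<in> elems UNIV I mu"
  unfolding padd_def by (rule chart_inv_in_elems_UNIV)

lemma padd_in_elems:
  assumes "subring_R F'" "F \<subseteq> F'" "\<alpha> \<in> I" "m \<in> elems F' I mu" "m' \<in> elems F' I mu"
  shows "padd I mu \<alpha> m m' \<in> elems F' I mu"
  unfolding padd_def using assms
  by (intro chart_inv_in_elems) (auto simp: elems_def Fvec_def subring_R_def)

lemma psmul_in_elems:
  assumes "subring_R F'" "F \<subseteq> F'" "c \<in> F'" "m \<in> elems F' I mu"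
  shows "psmul I mu c m \<in> elems F' I mu"
  unfolding psmul_def Let_def using assms some_chart_in
  by (intro chart_inv_in_elems) (auto simp: elems_def Fvec_def subring_R_def)

lemma psmul_chart_inv:
  "psmul I mu c (chart_inv I mu (some_chart I) x) = chart_inv I mu (some_chart I) (c *\<^sub>R x)"
  unfolding psmul_def Let_def by (simp add: chart_inv_apply_self[OF some_chart_in])

lemma continuous_homogeneous_eq_if_eq_on_elems:
  assumes "subring_R F'" "F \<subseteq> F'"
    and "continuous_homogeneous I mu h1" "continuous_homogeneous I mu h2"
    and eq: "\<And>m. m \<in> elems F' I mu \<Longrightarrow> h1 m = h2 m"
    and m: "m \<in> elems UNIV I mu"
  shows "h1 m = h2 m"
proof -
  let ?c = "chart_inv I mu (some_chart I)"
  have "h1 (?c x) = h2 (?c x)" for x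
  proof (rule continuous_homogeneous_eq_if_eq_on_integer_points)
    show "continuous_on UNIV (\<lambda>x. h1 (?c x))" "continuous_on UNIV (\<lambda>x. h2 (?c x))"
      using assms(3,4) unfolding continuous_homogeneous_def by blast+
    show "h1 (?c (t *\<^sub>R x)) = t * h1 (?c x)" "h2 (?c (t *\<^sub>R x)) = t * h2 (?c x)"
      if "0 \<le> t" for t x
      using assms(3,4) that unfolding continuous_homogeneous_def by blast+
    show "h1 (?c z) = h2 (?c z)" if "\<forall>i. z $ i \<in> \<int>" for z
      using that subring_R_Ints[OF assms(1)]
      by (intro eq chart_inv_in_elems[OF assms(1,2) some_chart_in]) (auto simp: Fvec_def)
  qed
  then show ?thesis using chart_inv_of_elem[OF some_chart_in m] by metis
qed

text \<open>A real point is superadditive and positively homogeneous in each chart, hence concave and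
  therefore continuous.\<close>
lemma continuous_homogeneous_point:
  assumes "finite I" and p: "p \<in> Sp UNIV I mu"
  shows "continuous_homogeneous I mu p"
proof -
  let ?c = "chart_inv I mu (some_chart I)"
  have hom: "p (?c (t *\<^sub>R x)) = t * p (?c x)" if "0 \<le> t" for t x
    using SpD(4)[OF p _ that chart_inv_in_elems_UNIV[OF some_chart_in]]
    by (simp add: psmul_chart_inv)
  have superadd: "p (?c x) + p (?c y) \<le> p (?c (x + y))" for x y
  proof -
    have "p (?c x) + p (?c y) = Min ((\<lambda>\<alpha>. p (padd I mu \<alpha> (?c x) (?c y))) ` I)"
      by (intro SpD(3)[OF p] chart_inv_in_elems_UNIV[OF some_chart_in])
    also have "\<dots> \<le> p (padd I mu (some_chart I) (?c x) (?c y))"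
      using assms(1) some_chart_in by (intro Min_le) auto
    finally show ?thesis
      unfolding padd_def chart_inv_apply_self[OF some_chart_in] .
  qed
  have "convex_on UNIV (\<lambda>x. - p (?c x))"
  proof (rule convex_onI)
    fix t :: real and x y :: "real^'r" assume "0 < t" "t < 1"
    then show "- p (?c ((1 - t) *\<^sub>R x + t *\<^sub>R y)) \<le> (1 - t) * - p (?c x) + t * - p (?c y)"
      using superadd[of "(1 - t) *\<^sub>R x" "t *\<^sub>R y"] hom[of "1 - t" x] hom[of t y] by simp
  qed simp
  then have "continuous_on UNIV (\<lambda>x. - (- p (?c x)))"
    by (intro continuous_on_minus convex_on_continuous) auto
  then show ?thesis unfolding continuous_homogeneous_def using hom by simp
qed

end

section \<open>The canonical semialgebra\<close>

lemma cls_eq_class: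
  "S \<in> finne F' I mu \<Longrightarrow> cls F' I mu S = {T \<in> finne F' I mu. pconv F' I mu T = pconv F' I mu S}"
  unfolding cls_def pcrel_def by auto

lemma cls_eq_cls:
  "S \<in> finne F' I mu \<Longrightarrow> T \<in> finne F' I mu \<Longrightarrow> pconv F' I mu S = pconv F' I mu T \<Longrightarrow>
     cls F' I mu S = cls F' I mu T"
  by (simp add: cls_eq_class)

lemma cls_in_quotient: "S \<in> finne F' I mu \<Longrightarrow> cls F' I mu S \<in> finne F' I mu // pcrel F' I mu"
  unfolding quotient_def cls_def by blast

lemma rep_cls:
  assumes "S \<in> finne F' I mu"
  shows "rep (cls F' I mu S) \<in> finne F' I mu"
    and "pconv F' I mu (rep (cls F' I mu S)) = pconv F' I mu S"
proof -
  have "S \<in> cls F' I mu S" using assms by (simp add: cls_eq_class)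
  then have "rep (cls F' I mu S) \<in> cls F' I mu S" unfolding rep_def by (rule someI)
  then show "rep (cls F' I mu S) \<in> finne F' I mu"
    and "pconv F' I mu (rep (cls F' I mu S)) = pconv F' I mu S"
    using assms by (simp_all add: cls_eq_class)
qed

lemma finne_quotientE:
  assumes "X \<in> finne F' I mu // pcrel F' I mu"
  obtains S where "S \<in> finne F' I mu" "X = cls F' I mu S"
  using assms unfolding quotient_def cls_def by blast

lemma rep_in_finne: "X \<in> finne F' I mu // pcrel F' I mu \<Longrightarrow> rep X \<in> finne F' I mu"
  by (erule finne_quotientE) (simp add: rep_cls(1))

lemma cls_rep:
  assumes "X \<in> finne F' I mu // pcrel F' I mu"
  shows "cls F' I mu (rep X) = X"
proof -
  obtain S where S: "S \<in> finne F' I mu" and X: "X = cls F' I mu S"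
    using assms by (rule finne_quotientE)
  show ?thesis using cls_eq_cls[OF rep_cls(1)[OF S] S rep_cls(2)[OF S]] X by simp
qed

definition padd_set ::
    "'i set \<Rightarrow> ('i \<Rightarrow> 'i \<Rightarrow> real^'r \<Rightarrow> real^'r) \<Rightarrow> ('i \<Rightarrow> real^'r) set \<Rightarrow> ('i \<Rightarrow> real^'r) set
       \<Rightarrow> ('i \<Rightarrow> real^'r) set" where
  "padd_set I mu A B = {padd I mu \<alpha> s t | \<alpha> s t. \<alpha> \<in> I \<and> s \<in> A \<and> t \<in> B}"

lemma canon_sa_simps:
  "scar (canon_sa F' I mu) = insert None (Some ` (finne F' I mu // pcrel F' I mu))"
  "spl (canon_sa F' I mu) (Some X) (Some Y) = Some (cls F' I mu (rep X \<union> rep Y))"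
  "spl (canon_sa F' I mu) None y = y"
  "spl (canon_sa F' I mu) x None = x"
  "stm (canon_sa F' I mu) (Some X) (Some Y) = Some (cls F' I mu (padd_set I mu (rep X) (rep Y)))"
  "stm (canon_sa F' I mu) None y = None"
  "stm (canon_sa F' I mu) x None = None"
  "ssc (canon_sa F' I mu) c (Some X) = Some (cls F' I mu (psmul I mu c ` rep X))"
  "ssc (canon_sa F' I mu) c None = None"
  "sinf (canon_sa F' I mu) = None"
  by (simp_all add: canon_sa_def padd_set_def split: option.split)

lemma canon_sa_carrier_cases:
  assumes "x \<in> scar (canon_sa F' I mu)"
  obtains "x = None" | X where "X \<in> finne F' I mu // pcrel F' I mu" "x = Some X"
  using assms unfolding canon_sa_simps(1) by blast

lemma spl_canon_sa_closed:
  assumes "x \<in> scar (canon_sa F' I mu)" "y \<in> scar (canon_sa F' I mu)"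
  shows "spl (canon_sa F' I mu) x y \<in> scar (canon_sa F' I mu)"
proof (cases rule: canon_sa_carrier_cases[OF assms(1)])
  case (2 X)
  show ?thesis
  proof (cases rule: canon_sa_carrier_cases[OF assms(2)])
    case (2 Y)
    have "rep X \<union> rep Y \<in> finne F' I mu"
      using rep_in_finne[OF \<open>X \<in> _\<close>] rep_in_finne[OF \<open>Y \<in> _\<close>] unfolding finne_def by blast
    then show ?thesis using \<open>x = Some X\<close> \<open>y = Some Y\<close> by (simp add: canon_sa_simps cls_in_quotient)
  qed (use assms(1) in \<open>simp add: canon_sa_simps\<close>)
qed (use assms(2) in \<open>simp add: canon_sa_simps\<close>)

context
  fixes F :: "real set" and I :: "'i set" and mu :: "'i \<Rightarrow> 'i \<Rightarrow> real^'r \<Rightarrow> real^'r"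
  assumes poly: "polyptych F I mu"
begin

lemma padd_set_in_finne:
  assumes "finite I" "subring_R F'" "F \<subseteq> F'" "A \<in> finne F' I mu" "B \<in> finne F' I mu"
  shows "padd_set I mu A B \<in> finne F' I mu"
proof -
  have "padd_set I mu A B = (\<lambda>(\<alpha>, s, t). padd I mu \<alpha> s t) ` (I \<times> A \<times> B)"
    unfolding padd_set_def by force
  moreover have "I \<noteq> {}" using poly unfolding polyptych_def by blast
  moreover have "padd_set I mu A B \<subseteq> elems F' I mu"
    using assms(4,5) padd_in_elems[OF poly assms(2,3)] unfolding finne_def padd_set_def by blast
  ultimately show ?thesis using assms(1,4,5) unfolding finne_def by auto
qed

lemma psmul_image_in_finne:
  assumes "subring_R F'" "F \<subseteq> F'" "c \<in> F'" "A \<in> finne F' I mu"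
  shows "psmul I mu c ` A \<in> finne F' I mu"
  using assms(4) psmul_in_elems[OF poly assms(1-3)] unfolding finne_def by auto

lemma stm_canon_sa_closed:
  assumes "finite I" "subring_R F'" "F \<subseteq> F'"
    and "x \<in> scar (canon_sa F' I mu)" "y \<in> scar (canon_sa F' I mu)"
  shows "stm (canon_sa F' I mu) x y \<in> scar (canon_sa F' I mu)"
proof (cases rule: canon_sa_carrier_cases[OF assms(4)])
  case (2 X)
  show ?thesis
  proof (cases rule: canon_sa_carrier_cases[OF assms(5)])
    case (2 Y)
    have "padd_set I mu (rep X) (rep Y) \<in> finne F' I mu"
      using padd_set_in_finne[OF assms(1-3) rep_in_finne rep_in_finne] \<open>X \<in> _\<close> \<open>Y \<in> _\<close> .
    then show ?thesis using \<open>x = Some X\<close> \<open>y = Some Y\<close> by (simp add: canon_sa_simps cls_in_quotient)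
  qed (simp add: canon_sa_simps)
qed (simp add: canon_sa_simps)

lemma ssc_canon_sa_closed:
  assumes "subring_R F'" "F \<subseteq> F'" "c \<in> F'" "x \<in> scar (canon_sa F' I mu)"
  shows "ssc (canon_sa F' I mu) c x \<in> scar (canon_sa F' I mu)"
proof (cases rule: canon_sa_carrier_cases[OF assms(4)])
  case (2 X)
  then show ?thesis
    using psmul_image_in_finne[OF assms(1-3) rep_in_finne[OF \<open>X \<in> _\<close>]]
    by (simp add: canon_sa_simps cls_in_quotient)
qed (simp add: canon_sa_simps)

end

section \<open>The point semialgebra\<close>

lemma point_sa_simps:
  "spl (point_sa F F' I mu) = ppl (elems UNIV I mu)"
  "stm (point_sa F F' I mu) = ptm (elems UNIV I mu)"
  "ssc (point_sa F F' I mu) = psc (elems UNIV I mu)"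
  "sinf (point_sa F F' I mu) = None"
  by (simp_all add: point_sa_def)

lemma point_sa_carrier_subset:
  assumes "None \<in> X" "\<And>p. p \<in> Sp F' I mu \<Longrightarrow> Some (ext_pt F' I mu p) \<in> X"
    and "\<And>x y. x \<in> X \<Longrightarrow> y \<in> X \<Longrightarrow> ppl (elems UNIV I mu) x y \<in> X"
    and "\<And>x y. x \<in> X \<Longrightarrow> y \<in> X \<Longrightarrow> ptm (elems UNIV I mu) x y \<in> X"
    and "\<And>c x. c \<in> F \<Longrightarrow> 0 \<le> c \<Longrightarrow> x \<in> X \<Longrightarrow> psc (elems UNIV I mu) c x \<in> X"
  shows "scar (point_sa F F' I mu) \<subseteq> X"
proof -
  have "X \<in> {X. None \<in> X \<and> (\<forall>p\<in>Sp F' I mu. Some (ext_pt F' I mu p) \<in> X) \<and>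
      (\<forall>x\<in>X. \<forall>y\<in>X. ppl (elems UNIV I mu) x y \<in> X \<and> ptm (elems UNIV I mu) x y \<in> X) \<and>
      (\<forall>c\<in>F. 0 \<le> c \<longrightarrow> (\<forall>x\<in>X. psc (elems UNIV I mu) c x \<in> X))}"
    using assms by blast
  then show ?thesis unfolding point_sa_def semialg.select_convs by (rule Inter_lower)
qed

lemma ext_pt_in_point_sa:
  "p \<in> Sp F' I mu \<Longrightarrow> Some (ext_pt F' I mu p) \<in> scar (point_sa F F' I mu)"
  by (simp add: point_sa_def)

lemma ppl_in_point_sa:
  "x \<in> scar (point_sa F F' I mu) \<Longrightarrow> y \<in> scar (point_sa F F' I mu) \<Longrightarrow>
     ppl (elems UNIV I mu) x y \<in> scar (point_sa F F' I mu)"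
  by (simp add: point_sa_def)

section \<open>Strict dual pairs\<close>

lemma strict_dual_pairD:
  assumes "strict_dual_pair F F' I mu J nu v w"
  shows "\<forall>m\<in>elems UNIV I mu. v m \<in> Sp UNIV J nu"
    and "\<forall>n\<in>elems UNIV J nu. w n \<in> Sp UNIV I mu"
    and "\<forall>m\<in>elems F' I mu. restrict (v m) (elems F' J nu) \<in> Sp F' J nu"
    and "\<forall>n\<in>elems F' J nu. restrict (w n) (elems F' I mu) \<in> Sp F' I mu"
    and "\<forall>m\<in>elems F' I mu. \<forall>n\<in>elems F' J nu. v m n = w n m"
    and "bij_betw (\<lambda>m. restrict (v m) (elems F' J nu)) (elems F' I mu) (Sp F' J nu)"
    and "bij_betw (\<lambda>n. restrict (w n) (elems F' I mu)) (elems F' J nu) (Sp F' I mu)"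
  by (insert assms[unfolded strict_dual_pair_def], elim conjE, assumption)+

lemma strict_dual_pair_swap:
  "strict_dual_pair F F' I mu J nu v w \<Longrightarrow> strict_dual_pair F F' J nu I mu w v"
  unfolding strict_dual_pair_def by (simp add: eq_commute[of "v _ _"])

locale strict_dual =
  fixes F F' :: "real set"
    and I :: "'i set" and mu :: "'i \<Rightarrow> 'i \<Rightarrow> real^'r \<Rightarrow> real^'r"
    and J :: "'j set" and nu :: "'j \<Rightarrow> 'j \<Rightarrow> real^'s \<Rightarrow> real^'s"
    and v :: "('i \<Rightarrow> real^'r) \<Rightarrow> ('j \<Rightarrow> real^'s) \<Rightarrow> real"
    and w :: "('j \<Rightarrow> real^'s) \<Rightarrow> ('i \<Rightarrow> real^'r) \<Rightarrow> real"
  assumes subring_F': "subring_R F'" and F_subset_F': "F \<subseteq> F'"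
    and finite_polyptych_M: "finite_polyptych F I mu"
    and finite_polyptych_N: "finite_polyptych F J nu"
    and dual: "strict_dual_pair F F' I mu J nu v w"
begin

lemma polyptych_M: "polyptych F I mu" and finite_I: "finite I"
  using finite_polyptych_M unfolding finite_polyptych_def by auto

lemma polyptych_N: "polyptych F J nu" and finite_J: "finite J" and J_nonempty: "J \<noteq> {}"
  using finite_polyptych_N unfolding finite_polyptych_def polyptych_def by auto

lemma v_point: "m \<in> elems UNIV I mu \<Longrightarrow> v m \<in> Sp UNIV J nu"
  using strict_dual_pairD(1)[OF dual] by blast

lemma w_point: "n \<in> elems UNIV J nu \<Longrightarrow> w n \<in> Sp UNIV I mu"
  using strict_dual_pairD(2)[OF dual] by blast

lemma restrict_v_point: "m \<in> elems F' I mu \<Longrightarrow> restrict (v m) (elems F' J nu) \<in> Sp F' J nu"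
  using strict_dual_pairD(3)[OF dual] by blast

lemma restrict_w_point: "n \<in> elems F' J nu \<Longrightarrow> restrict (w n) (elems F' I mu) \<in> Sp F' I mu"
  using strict_dual_pairD(4)[OF dual] by blast

lemma v_eq_w: "m \<in> elems F' I mu \<Longrightarrow> n \<in> elems F' J nu \<Longrightarrow> v m n = w n m"
  using strict_dual_pairD(5)[OF dual] by blast

lemma points_restrict_v: "p \<in> Sp F' J nu \<Longrightarrow> \<exists>m\<in>elems F' I mu. p = restrict (v m) (elems F' J nu)"
  using strict_dual_pairD(6)[OF dual] unfolding bij_betw_def by blast

lemma points_restrict_w: "p \<in> Sp F' I mu \<Longrightarrow> \<exists>n\<in>elems F' J nu. p = restrict (w n) (elems F' I mu)"
  using strict_dual_pairD(7)[OF dual] unfolding bij_betw_def by blast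

lemma w_in_F': "m \<in> elems F' I mu \<Longrightarrow> n \<in> elems F' J nu \<Longrightarrow> w n m \<in> F'"
  using SpD(2)[OF restrict_v_point] v_eq_w by fastforce

lemma w_continuous_homogeneous: "n \<in> elems UNIV J nu \<Longrightarrow> continuous_homogeneous I mu (w n)"
  by (rule continuous_homogeneous_point[OF polyptych_M finite_I w_point])

definition wmin :: "('j \<Rightarrow> real^'s) set \<Rightarrow> ('i \<Rightarrow> real^'r) \<Rightarrow> real" where
  "wmin S = restrict (\<lambda>m. Min ((\<lambda>n. w n m) ` S)) (elems UNIV I mu)"

lemma Min_w_continuous_homogeneous:
  "S \<in> finne F' J nu \<Longrightarrow> continuous_homogeneous I mu (\<lambda>m. Min ((\<lambda>n. w n m) ` S))"
  using finneD elems_imp_elems_UNIV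
  by (blast intro: continuous_homogeneous_Min w_continuous_homogeneous)

text \<open>By bijectivity of v, the half-spaces cutting out a point-convex hull are those of the points
  v m, and S lies in the half-space of v m with constant a iff a is at most the minimum of w over S.\<close>
lemma pconv_eq:
  assumes S: "S \<in> finne F' J nu"
  shows "pconv F' J nu S = {n \<in> elems F' J nu. \<forall>m\<in>elems F' I mu. Min ((\<lambda>s. w s m) ` S) \<le> w n m}"
proof (intro set_eqI iffI)
  have Sf: "finite S" "S \<noteq> {}" "S \<subseteq> elems F' J nu" using finneD[OF S] by auto
  fix n
  assume n: "n \<in> pconv F' J nu S"
  then have nF: "n \<in> elems F' J nu" unfolding pconv_def by blast
  have "Min ((\<lambda>s. w s m) ` S) \<le> w n m" if m: "m \<in> elems F' I mu" for m
  proof -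
    let ?p = "restrict (v m) (elems F' J nu)" and ?a = "Min ((\<lambda>s. w s m) ` S)"
    have "?a \<in> (\<lambda>s. w s m) ` S" using Sf by (intro Min_in) auto
    then obtain s0 where "s0 \<in> S" "?a = w s0 m" by blast
    then have "?a \<in> F'" using Sf w_in_F'[OF m] by auto
    moreover have "S \<subseteq> halfsp F' J nu ?p ?a"
      unfolding halfsp_def using Sf v_eq_w[OF m] by auto
    ultimately have "n \<in> halfsp F' J nu ?p ?a"
      using n restrict_v_point[OF m] unfolding pconv_def by blast
    then show ?thesis unfolding halfsp_def using v_eq_w[OF m nF] by auto
  qed
  with nF show "n \<in> {n \<in> elems F' J nu. \<forall>m\<in>elems F' I mu. Min ((\<lambda>s. w s m) ` S) \<le> w n m}"
    by blast
next
  have Sf: "finite S" "S \<noteq> {}" "S \<subseteq> elems F' J nu" using finneD[OF S] by auto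
  fix n
  assume "n \<in> {n \<in> elems F' J nu. \<forall>m\<in>elems F' I mu. Min ((\<lambda>s. w s m) ` S) \<le> w n m}"
  then have nF: "n \<in> elems F' J nu" and min_le: "\<And>m. m \<in> elems F' I mu \<Longrightarrow> Min ((\<lambda>s. w s m) ` S) \<le> w n m"
    by auto
  have "n \<in> halfsp F' J nu p a"
    if p: "p \<in> Sp F' J nu" and S_sub: "S \<subseteq> halfsp F' J nu p a" for p a
  proof -
    obtain m where m: "m \<in> elems F' I mu" and p: "p = restrict (v m) (elems F' J nu)"
      using points_restrict_v[OF p] by blast
    have "a \<le> w s m" if "s \<in> S" for s
      using S_sub that Sf v_eq_w[OF m] unfolding halfsp_def p by auto
    then have "a \<le> Min ((\<lambda>s. w s m) ` S)" using Sf by (intro Min.boundedI) auto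
    then show ?thesis using min_le[OF m] nF v_eq_w[OF m nF] unfolding halfsp_def p by auto
  qed
  then show "n \<in> pconv F' J nu S" unfolding pconv_def using nF by blast
qed

lemma pconv_eq_iff_Min_eq:
  assumes S: "S \<in> finne F' J nu" and T: "T \<in> finne F' J nu"
  shows "pconv F' J nu S = pconv F' J nu T \<longleftrightarrow>
     (\<forall>m\<in>elems F' I mu. Min ((\<lambda>s. w s m) ` S) = Min ((\<lambda>s. w s m) ` T))"
proof
  have Min_le: "Min ((\<lambda>s. w s m) ` B) \<le> Min ((\<lambda>s. w s m) ` A)"
    if A: "A \<in> finne F' J nu" and B: "B \<in> finne F' J nu"
      and eq: "pconv F' J nu A = pconv F' J nu B" and m: "m \<in> elems F' I mu" for A B m
  proof -
    have Af: "finite A" "A \<noteq> {}" "A \<subseteq> elems F' J nu" using finneD[OF A] by auto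
    have "A \<subseteq> pconv F' J nu A" unfolding pconv_eq[OF A] using Af by (auto intro: Min_le)
    then have "Min ((\<lambda>s. w s m) ` B) \<le> w a m" if "a \<in> A" for a
      using that m eq unfolding pconv_eq[OF B] by blast
    then show ?thesis using Af by (intro Min.boundedI) auto
  qed
  show "\<forall>m\<in>elems F' I mu. Min ((\<lambda>s. w s m) ` S) = Min ((\<lambda>s. w s m) ` T)"
    if "pconv F' J nu S = pconv F' J nu T"
    using Min_le[OF S T that] Min_le[OF T S that[symmetric]] by (simp add: order_antisym)
qed (simp add: pconv_eq[OF S] pconv_eq[OF T])

text \<open>Agreement on the F'-points suffices, since both sides are continuous and homogeneous.\<close>
lemma wmin_eq_iff_pconv_eq:
  assumes S: "S \<in> finne F' J nu" and T: "T \<in> finne F' J nu"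
  shows "wmin S = wmin T \<longleftrightarrow> pconv F' J nu S = pconv F' J nu T"
proof
  assume eq: "wmin S = wmin T"
  have "Min ((\<lambda>s. w s m) ` S) = Min ((\<lambda>s. w s m) ` T)" if "m \<in> elems F' I mu" for m
    using fun_cong[OF eq, of m] elems_imp_elems_UNIV[OF that] unfolding wmin_def by simp
  then show "pconv F' J nu S = pconv F' J nu T" by (simp add: pconv_eq_iff_Min_eq[OF S T])
next
  assume "pconv F' J nu S = pconv F' J nu T"
  then have on_F': "\<forall>m\<in>elems F' I mu. Min ((\<lambda>s. w s m) ` S) = Min ((\<lambda>s. w s m) ` T)"
    by (simp add: pconv_eq_iff_Min_eq[OF S T])
  have "Min ((\<lambda>s. w s m) ` S) = Min ((\<lambda>s. w s m) ` T)" if "m \<in> elems UNIV I mu" for m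
    by (rule continuous_homogeneous_eq_if_eq_on_elems[OF polyptych_M subring_F' F_subset_F'
          Min_w_continuous_homogeneous[OF S] Min_w_continuous_homogeneous[OF T] _ that])
      (use on_F' in blast)
  then show "wmin S = wmin T" unfolding wmin_def by (intro restrict_ext) simp
qed


text \<open>The point identity of v m, transported to w by duality on F'-points and extended to all
  real points by continuity.\<close>
lemma Min_w_padd:
  assumes s: "s \<in> elems F' J nu" and t: "t \<in> elems F' J nu" and m: "m \<in> elems UNIV I mu"
  shows "Min ((\<lambda>\<alpha>. w (padd J nu \<alpha> s t) m) ` J) = w s m + w t m"
proof (rule continuous_homogeneous_eq_if_eq_on_elems[OF polyptych_M subring_F' F_subset_F' _ _ _ m])
  show "continuous_homogeneous I mu (\<lambda>m. Min ((\<lambda>\<alpha>. w (padd J nu \<alpha> s t) m) ` J))"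
    using padd_in_elems_UNIV[OF polyptych_N]
    by (intro continuous_homogeneous_Min[OF finite_J J_nonempty] w_continuous_homogeneous)
  show "continuous_homogeneous I mu (\<lambda>m. w s m + w t m)"
    using s t by (intro continuous_homogeneous_add w_continuous_homogeneous elems_imp_elems_UNIV)
next
  fix m assume mF: "m \<in> elems F' I mu"
  have "(\<lambda>\<alpha>. v m (padd J nu \<alpha> s t)) ` J = (\<lambda>\<alpha>. w (padd J nu \<alpha> s t) m) ` J"
    using v_eq_w[OF mF padd_in_elems[OF polyptych_N subring_F' F_subset_F' _ s t]] by simp
  moreover have "v m s + v m t = Min ((\<lambda>\<alpha>. v m (padd J nu \<alpha> s t)) ` J)"
    by (rule SpD(3)[OF v_point[OF elems_imp_elems_UNIV[OF mF]] elems_imp_elems_UNIV[OF s] elems_imp_elems_UNIV[OF t]])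
  ultimately show "Min ((\<lambda>\<alpha>. w (padd J nu \<alpha> s t) m) ` J) = w s m + w t m"
    using v_eq_w[OF mF s] v_eq_w[OF mF t] by simp
qed

lemma w_psmul:
  assumes s: "s \<in> elems F' J nu" and c: "c \<in> F" "0 \<le> c" and m: "m \<in> elems UNIV I mu"
  shows "w (psmul J nu c s) m = c * w s m"
proof (rule continuous_homogeneous_eq_if_eq_on_elems[OF polyptych_M subring_F' F_subset_F' _ _ _ m])
  have cs: "psmul J nu c s \<in> elems F' J nu"
    using c(1) F_subset_F' by (intro psmul_in_elems[OF polyptych_N subring_F' F_subset_F' _ s]) blast
  then show "continuous_homogeneous I mu (w (psmul J nu c s))"
    by (intro w_continuous_homogeneous elems_imp_elems_UNIV)
  show "continuous_homogeneous I mu (\<lambda>m. c * w s m)"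
    using s by (intro continuous_homogeneous_cmult w_continuous_homogeneous elems_imp_elems_UNIV)
  fix m assume mF: "m \<in> elems F' I mu"
  have "v m (psmul J nu c s) = c * v m s"
    by (rule SpD(4)[OF v_point[OF elems_imp_elems_UNIV[OF mF]] _ c(2) elems_imp_elems_UNIV[OF s]]) simp
  then show "w (psmul J nu c s) m = c * w s m"
    using v_eq_w[OF mF s] v_eq_w[OF mF cs] by simp
qed

lemma wmin_singleton:
  assumes "n \<in> elems UNIV J nu"
  shows "wmin {n} = w n"
proof
  fix m
  show "wmin {n} m = w n m"
    using extensional_arb[OF SpD(1)[OF w_point[OF assms]]] unfolding wmin_def
    by (cases "m \<in> elems UNIV I mu") simp_all
qed

lemma wmin_Un:
  assumes "A \<in> finne F' J nu" "B \<in> finne F' J nu"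
  shows "wmin (A \<union> B) = restrict (\<lambda>m. min (wmin A m) (wmin B m)) (elems UNIV I mu)"
  unfolding wmin_def using finneD[OF assms(1)] finneD[OF assms(2)]
  by (intro restrict_ext) (simp add: image_Un Min.union)

lemma wmin_padd_set:
  assumes A: "A \<in> finne F' J nu" and B: "B \<in> finne F' J nu"
  shows "wmin (padd_set J nu A B) = restrict (\<lambda>m. wmin A m + wmin B m) (elems UNIV I mu)"
  unfolding wmin_def
proof (rule restrict_ext)
  fix m assume m: "m \<in> elems UNIV I mu"
  have Af: "finite A" "A \<noteq> {}" "A \<subseteq> elems F' J nu" and Bf: "finite B" "B \<noteq> {}" "B \<subseteq> elems F' J nu"
    using finneD[OF A] finneD[OF B] by auto
  have P: "padd_set J nu A B \<in> finne F' J nu"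
    by (rule padd_set_in_finne[OF polyptych_N finite_J subring_F' F_subset_F' A B])
  let ?a = "Min ((\<lambda>s. w s m) ` A)" and ?b = "Min ((\<lambda>s. w s m) ` B)"
  have "?a \<in> (\<lambda>s. w s m) ` A" "?b \<in> (\<lambda>s. w s m) ` B" using Af Bf by (auto intro!: Min_in)
  then obtain s0 t0 where st0: "s0 \<in> A" "?a = w s0 m" "t0 \<in> B" "?b = w t0 m" by blast
  have "Min ((\<lambda>\<alpha>. w (padd J nu \<alpha> s0 t0) m) ` J) \<in> (\<lambda>\<alpha>. w (padd J nu \<alpha> s0 t0) m) ` J"
    using finite_J J_nonempty by (intro Min_in) auto
  then obtain \<alpha>0 where \<alpha>0: "\<alpha>0 \<in> J"
    "Min ((\<lambda>\<alpha>. w (padd J nu \<alpha> s0 t0) m) ` J) = w (padd J nu \<alpha>0 s0 t0) m" by blast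
  have "padd J nu \<alpha>0 s0 t0 \<in> padd_set J nu A B" unfolding padd_set_def using \<alpha>0 st0 by blast
  then have "Min ((\<lambda>n. w n m) ` padd_set J nu A B) \<le> w (padd J nu \<alpha>0 s0 t0) m"
    using finneD[OF P] by (intro Min_le) auto
  also have "\<dots> = ?a + ?b"
    using \<alpha>0(2) Min_w_padd[OF subsetD[OF Af(3) \<open>s0 \<in> A\<close>] subsetD[OF Bf(3) \<open>t0 \<in> B\<close>] m] st0(2,4)
    by linarith
  finally have le: "Min ((\<lambda>n. w n m) ` padd_set J nu A B) \<le> ?a + ?b" .
  have ge: "?a + ?b \<le> y" if y: "y \<in> (\<lambda>n. w n m) ` padd_set J nu A B" for y
  proof -
    obtain \<alpha> s t where y: "y = w (padd J nu \<alpha> s t) m" and "\<alpha> \<in> J" "s \<in> A" "t \<in> B"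
      using y unfolding padd_set_def by blast
    then have "?a + ?b \<le> w s m + w t m" using Af Bf by (intro add_mono Min_le) auto
    also have "\<dots> = Min ((\<lambda>\<alpha>. w (padd J nu \<alpha> s t) m) ` J)"
      using Min_w_padd[OF subsetD[OF Af(3) \<open>s \<in> A\<close>] subsetD[OF Bf(3) \<open>t \<in> B\<close>] m] by linarith
    also have "\<dots> \<le> y" unfolding y using finite_J \<open>\<alpha> \<in> J\<close> by (intro Min_le) auto
    finally show ?thesis .
  qed
  have "?a + ?b \<le> Min ((\<lambda>n. w n m) ` padd_set J nu A B)"
    using finneD[OF P] by (intro Min.boundedI ge) auto
  with le have "Min ((\<lambda>n. w n m) ` padd_set J nu A B) = ?a + ?b" by (rule antisym)
  then show "Min ((\<lambda>n. w n m) ` padd_set J nu A B) =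
      restrict (\<lambda>m. Min ((\<lambda>n. w n m) ` A)) (elems UNIV I mu) m +
      restrict (\<lambda>m. Min ((\<lambda>n. w n m) ` B)) (elems UNIV I mu) m"
    using m by simp
qed

lemma wmin_psmul_image:
  assumes A: "A \<in> finne F' J nu" and c: "c \<in> F" "0 \<le> c"
  shows "wmin (psmul J nu c ` A) = restrict (\<lambda>m. c * wmin A m) (elems UNIV I mu)"
  unfolding wmin_def
proof (rule restrict_ext)
  fix m assume m: "m \<in> elems UNIV I mu"
  have Af: "finite A" "A \<noteq> {}" "A \<subseteq> elems F' J nu" using finneD[OF A] by auto
  have "(\<lambda>n. w n m) ` psmul J nu c ` A = (*) c ` (\<lambda>s. w s m) ` A"
    unfolding image_image using w_psmul[OF _ c m] Af by (intro image_cong) auto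
  also have "Min \<dots> = c * Min ((\<lambda>s. w s m) ` A)"
    using c Af by (intro mono_Min_commute[symmetric] monoI mult_left_mono) auto
  finally show "Min ((\<lambda>n. w n m) ` psmul J nu c ` A) =
      c * restrict (\<lambda>m. Min ((\<lambda>n. w n m) ` A)) (elems UNIV I mu) m"
    using m by simp
qed


lemma ext_pt_restrict_w:
  assumes n: "n \<in> elems F' J nu"
  shows "ext_pt F' I mu (restrict (w n) (elems F' I mu)) = w n"
  unfolding ext_pt_def
proof (rule the_equality)
  show "w n \<in> Sp UNIV I mu \<and> (\<forall>m\<in>elems F' I mu. w n m = restrict (w n) (elems F' I mu) m)"
    using w_point[OF elems_imp_elems_UNIV[OF n]] by simp
next
  fix q assume "q \<in> Sp UNIV I mu \<and> (\<forall>m\<in>elems F' I mu. q m = restrict (w n) (elems F' I mu) m)"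
  then have q: "q \<in> Sp UNIV I mu" and q_eq: "\<And>m. m \<in> elems F' I mu \<Longrightarrow> q m = w n m" by auto
  show "q = w n"
  proof
    fix m
    show "q m = w n m"
    proof (cases "m \<in> elems UNIV I mu")
      case True
      show ?thesis
        by (rule continuous_homogeneous_eq_if_eq_on_elems[OF polyptych_M subring_F' F_subset_F'
              continuous_homogeneous_point[OF polyptych_M finite_I q]
              w_continuous_homogeneous[OF elems_imp_elems_UNIV[OF n]] q_eq True])
    next
      case False
      then show ?thesis
        using extensional_arb[OF SpD(1)[OF q]] extensional_arb[OF SpD(1)[OF w_point[OF elems_imp_elems_UNIV[OF n]]]]
        by simp
    qed
  qed
qed

lemma singleton_in_point_sa:
  assumes "n \<in> elems F' J nu"
  shows "Some (wmin {n}) \<in> scar (point_sa F F' I mu)"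
  using ext_pt_in_point_sa[OF restrict_w_point[OF assms]] ext_pt_restrict_w[OF assms]
    wmin_singleton[OF elems_imp_elems_UNIV[OF assms]]
  by simp

lemma wmin_in_point_sa:
  assumes "S \<in> finne F' J nu"
  shows "Some (wmin S) \<in> scar (point_sa F F' I mu)"
proof -
  have "finite S" "S \<noteq> {}" "S \<subseteq> elems F' J nu" using finneD[OF assms] by auto
  then show ?thesis
  proof (induction S rule: finite_ne_induct)
    case (singleton n)
    then show ?case using singleton_in_point_sa by simp
  next
    case (insert n S)
    then have "{n} \<in> finne F' J nu" "S \<in> finne F' J nu" unfolding finne_def by auto
    then have "Some (wmin (insert n S)) = ppl (elems UNIV I mu) (Some (wmin {n})) (Some (wmin S))"
      using wmin_Un[of "{n}" S] by (simp add: ppl_def)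
    moreover have "Some (wmin {n}) \<in> scar (point_sa F F' I mu)"
      using insert.prems singleton_in_point_sa by simp
    ultimately show ?case using insert by (simp add: ppl_in_point_sa)
  qed
qed

definition wiso :: "('j \<Rightarrow> real^'s) set set option \<Rightarrow> (('i \<Rightarrow> real^'r) \<Rightarrow> real) option" where
  "wiso = map_option (\<lambda>X. wmin (rep X))"

lemma wiso_simps: "wiso None = None" "wiso (Some X) = Some (wmin (rep X))"
  unfolding wiso_def by simp_all

lemma wiso_cls:
  assumes "S \<in> finne F' J nu"
  shows "wiso (Some (cls F' J nu S)) = Some (wmin S)"
  using rep_cls[OF assms] wmin_eq_iff_pconv_eq[OF rep_cls(1)[OF assms] assms] by (simp add: wiso_simps)

lemma wiso_spl:
  assumes "x \<in> scar (canon_sa F' J nu)" "y \<in> scar (canon_sa F' J nu)"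
  shows "wiso (spl (canon_sa F' J nu) x y) = ppl (elems UNIV I mu) (wiso x) (wiso y)"
proof (cases rule: canon_sa_carrier_cases[OF assms(1)])
  case (2 X)
  show ?thesis
  proof (cases rule: canon_sa_carrier_cases[OF assms(2)])
    case (2 Y)
    have "rep X \<in> finne F' J nu" "rep Y \<in> finne F' J nu"
      using rep_in_finne \<open>X \<in> _\<close> \<open>Y \<in> _\<close> by blast+
    moreover from this have "rep X \<union> rep Y \<in> finne F' J nu" unfolding finne_def by blast
    ultimately have "wiso (spl (canon_sa F' J nu) x y) = Some (wmin (rep X \<union> rep Y))"
      using \<open>x = Some X\<close> \<open>y = Some Y\<close> by (simp add: canon_sa_simps wiso_cls)
    with \<open>rep X \<in> _\<close> \<open>rep Y \<in> _\<close> show ?thesis using \<open>x = Some X\<close> \<open>y = Some Y\<close>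
      by (simp add: wmin_Un ppl_def wiso_simps)
  qed (simp add: canon_sa_simps ppl_def wiso_def split: option.split)
qed (simp add: canon_sa_simps ppl_def wiso_def)

lemma wiso_stm:
  assumes "x \<in> scar (canon_sa F' J nu)" "y \<in> scar (canon_sa F' J nu)"
  shows "wiso (stm (canon_sa F' J nu) x y) = ptm (elems UNIV I mu) (wiso x) (wiso y)"
proof (cases rule: canon_sa_carrier_cases[OF assms(1)])
  case (2 X)
  show ?thesis
  proof (cases rule: canon_sa_carrier_cases[OF assms(2)])
    case (2 Y)
    have "rep X \<in> finne F' J nu" "rep Y \<in> finne F' J nu"
      using rep_in_finne \<open>X \<in> _\<close> \<open>Y \<in> _\<close> by blast+
    moreover from this have "padd_set J nu (rep X) (rep Y) \<in> finne F' J nu"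
      by (rule padd_set_in_finne[OF polyptych_N finite_J subring_F' F_subset_F'])
    ultimately have "wiso (stm (canon_sa F' J nu) x y) = Some (wmin (padd_set J nu (rep X) (rep Y)))"
      using \<open>x = Some X\<close> \<open>y = Some Y\<close> by (simp add: canon_sa_simps wiso_cls)
    with \<open>rep X \<in> _\<close> \<open>rep Y \<in> _\<close> show ?thesis using \<open>x = Some X\<close> \<open>y = Some Y\<close>
      by (simp add: wmin_padd_set ptm_def wiso_simps)
  qed (simp add: canon_sa_simps ptm_def wiso_def split: option.split)
qed (simp add: canon_sa_simps ptm_def wiso_def)

lemma wiso_ssc:
  assumes "x \<in> scar (canon_sa F' J nu)" "c \<in> F" "0 \<le> c"
  shows "wiso (ssc (canon_sa F' J nu) c x) = psc (elems UNIV I mu) c (wiso x)"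
proof (cases rule: canon_sa_carrier_cases[OF assms(1)])
  case (2 X)
  have "rep X \<in> finne F' J nu" using rep_in_finne \<open>X \<in> _\<close> by blast
  moreover from this have "psmul J nu c ` rep X \<in> finne F' J nu"
    using assms(2) F_subset_F' by (intro psmul_image_in_finne[OF polyptych_N subring_F' F_subset_F']) auto
  then have "wiso (ssc (canon_sa F' J nu) c x) = Some (wmin (psmul J nu c ` rep X))"
    using \<open>x = Some X\<close> by (simp add: canon_sa_simps wiso_cls)
  with \<open>rep X \<in> _\<close> show ?thesis using \<open>x = Some X\<close> assms(2,3)
    by (simp add: wmin_psmul_image psc_def wiso_simps)
qed (simp add: canon_sa_simps psc_def wiso_def)

lemma wiso_image: "wiso ` scar (canon_sa F' J nu) = scar (point_sa F F' I mu)"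
proof
  show "wiso ` scar (canon_sa F' J nu) \<subseteq> scar (point_sa F F' I mu)"
  proof
    fix z assume "z \<in> wiso ` scar (canon_sa F' J nu)"
    then obtain x where x: "x \<in> scar (canon_sa F' J nu)" and z: "z = wiso x" by blast
    show "z \<in> scar (point_sa F F' I mu)"
    proof (cases rule: canon_sa_carrier_cases[OF x])
      case 1
      then show ?thesis using z by (simp add: wiso_def point_sa_def)
    next
      case (2 X)
      then show ?thesis using z wmin_in_point_sa[OF rep_in_finne] by (simp add: wiso_def)
    qed
  qed
  let ?W = "wiso ` scar (canon_sa F' J nu)"
  show "scar (point_sa F F' I mu) \<subseteq> ?W"
  proof (rule point_sa_carrier_subset)
    show "None \<in> ?W" by (force simp: canon_sa_simps wiso_def)
    show "Some (ext_pt F' I mu p) \<in> ?W" if p: "p \<in> Sp F' I mu" for p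
    proof -
      obtain n where n: "n \<in> elems F' J nu" and p: "p = restrict (w n) (elems F' I mu)"
        using points_restrict_w[OF p] by blast
      then have "{n} \<in> finne F' J nu" unfolding finne_def by blast
      then have "Some (ext_pt F' I mu p) = wiso (Some (cls F' J nu {n}))"
        "Some (cls F' J nu {n}) \<in> scar (canon_sa F' J nu)"
        using ext_pt_restrict_w[OF n] wmin_singleton[OF elems_imp_elems_UNIV[OF n]]
        by (simp_all add: p wiso_cls canon_sa_simps cls_in_quotient)
      then show ?thesis by blast
    qed
    show "ppl (elems UNIV I mu) a b \<in> ?W" and "ptm (elems UNIV I mu) a b \<in> ?W"
      if ab: "a \<in> ?W" "b \<in> ?W" for a b
    proof -
      obtain x y where x: "x \<in> scar (canon_sa F' J nu)" "a = wiso x"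
        and y: "y \<in> scar (canon_sa F' J nu)" "b = wiso y"
        using ab by blast
      have "ppl (elems UNIV I mu) a b = wiso (spl (canon_sa F' J nu) x y)"
        and "ptm (elems UNIV I mu) a b = wiso (stm (canon_sa F' J nu) x y)"
        using wiso_spl[OF x(1) y(1)] wiso_stm[OF x(1) y(1)] x(2) y(2) by simp_all
      moreover have "spl (canon_sa F' J nu) x y \<in> scar (canon_sa F' J nu)"
        and "stm (canon_sa F' J nu) x y \<in> scar (canon_sa F' J nu)"
        using spl_canon_sa_closed[OF x(1) y(1)]
          stm_canon_sa_closed[OF polyptych_N finite_J subring_F' F_subset_F' x(1) y(1)] .
      ultimately show "ppl (elems UNIV I mu) a b \<in> ?W" and "ptm (elems UNIV I mu) a b \<in> ?W"
        by auto
    qed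
    show "psc (elems UNIV I mu) c a \<in> ?W" if c: "c \<in> F" "0 \<le> c" and a: "a \<in> ?W" for c a
    proof -
      obtain x where x: "x \<in> scar (canon_sa F' J nu)" "a = wiso x" using a by blast
      have "psc (elems UNIV I mu) c a = wiso (ssc (canon_sa F' J nu) c x)"
        using wiso_ssc[OF x(1) c] x(2) by simp
      moreover have "ssc (canon_sa F' J nu) c x \<in> scar (canon_sa F' J nu)"
        using c(1) F_subset_F' by (intro ssc_canon_sa_closed[OF polyptych_N subring_F' F_subset_F' _ x(1)]) blast
      ultimately show ?thesis by auto
    qed
  qed
qed

lemma inj_on_wiso: "inj_on wiso (scar (canon_sa F' J nu))"
proof
  fix x y assume x: "x \<in> scar (canon_sa F' J nu)" and y: "y \<in> scar (canon_sa F' J nu)"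
    and eq: "wiso x = wiso y"
  show "x = y"
  proof (cases rule: canon_sa_carrier_cases[OF x])
    case 1
    then show ?thesis using eq by (cases y) (simp_all add: wiso_simps)
  next
    case (2 X)
    show ?thesis
    proof (cases rule: canon_sa_carrier_cases[OF y])
      case 1
      then show ?thesis using eq \<open>x = Some X\<close> by (simp add: wiso_simps)
    next
      case (2 Y)
      have X: "rep X \<in> finne F' J nu" and Y: "rep Y \<in> finne F' J nu"
        using rep_in_finne \<open>X \<in> _\<close> \<open>Y \<in> _\<close> by blast+
      have "wmin (rep X) = wmin (rep Y)" using eq \<open>x = Some X\<close> \<open>y = Some Y\<close> by (simp add: wiso_simps)
      then have "cls F' J nu (rep X) = cls F' J nu (rep Y)"
        by (intro cls_eq_cls[OF X Y]) (simp add: wmin_eq_iff_pconv_eq[OF X Y])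
      then show ?thesis
        using cls_rep[OF \<open>X \<in> _\<close>] cls_rep[OF \<open>Y \<in> _\<close>] \<open>x = Some X\<close> \<open>y = Some Y\<close> by simp
    qed
  qed
qed

lemma sa_iso_wiso: "sa_iso F wiso (canon_sa F' J nu) (point_sa F F' I mu)"
  unfolding sa_iso_def bij_betw_def point_sa_simps
proof (intro conjI ballI allI impI)
  show "inj_on wiso (scar (canon_sa F' J nu))" by (rule inj_on_wiso)
  show "wiso ` scar (canon_sa F' J nu) = scar (point_sa F F' I mu)" by (rule wiso_image)
  show "wiso (sinf (canon_sa F' J nu)) = None" by (simp add: canon_sa_simps wiso_simps)
qed (simp_all add: wiso_spl wiso_stm wiso_ssc)

end

theorem mainTheorem8:
  fixes F F' :: "real set"
    and I :: "'i set" and mu :: "'i \<Rightarrow> 'i \<Rightarrow> real^'r \<Rightarrow> real^'r"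
    and J :: "'j set" and nu :: "'j \<Rightarrow> 'j \<Rightarrow> real^'s \<Rightarrow> real^'s"
    and v :: "('i \<Rightarrow> real^'r) \<Rightarrow> ('j \<Rightarrow> real^'s) \<Rightarrow> real"
    and w :: "('j \<Rightarrow> real^'s) \<Rightarrow> ('i \<Rightarrow> real^'r) \<Rightarrow> real"
  assumes "subring_R F" and "subring_R F'" and "F \<subseteq> F'"
    and "finite_polyptych F I mu" and "finite_polyptych F J nu"
    and "strict_dual_pair F F' I mu J nu v w"
  shows "(\<exists>\<Phi>. sa_iso F \<Phi> (canon_sa F' J nu) (point_sa F F' I mu) \<and> \<Phi> None = None \<and>
            (\<forall>S\<in>finne F' J nu. \<Phi> (Some (cls F' J nu S)) =
               Some (restrict (\<lambda>m. Min ((\<lambda>n. w n m) ` S)) (elems UNIV I mu)))) \<and>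
         (\<exists>\<Psi>. sa_iso F \<Psi> (canon_sa F' I mu) (point_sa F F' J nu) \<and> \<Psi> None = None \<and>
            (\<forall>S\<in>finne F' I mu. \<Psi> (Some (cls F' I mu S)) =
               Some (restrict (\<lambda>n. Min ((\<lambda>m. v m n) ` S)) (elems UNIV J nu))))"
proof -
  interpret M: strict_dual F F' I mu J nu v w
    using assms(2-6) by unfold_locales
  interpret N: strict_dual F F' J nu I mu w v
    using assms(2-5) strict_dual_pair_swap[OF assms(6)] by unfold_locales
  show ?thesis
    using M.sa_iso_wiso M.wiso_simps(1) M.wiso_cls N.sa_iso_wiso N.wiso_simps(1) N.wiso_cls
    unfolding M.wmin_def N.wmin_def by blast
qed

end
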